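(* Let $\Gamma$ be a graphical cake represented by a finite tree of minimal height $h\ge 1$, let two agents $A,B$ have valuations $v_A,v_B$ on $\Gamma$, and let $0\le t\le 1$ with entitlement vector $(t,1-t)$. Then there exists a weighted consensus division $(\alpha,\beta)$ of $\Gamma$ such that each of $\alpha$ and $\beta$ has at most $h+1$ connected components.
   Context: A graphical cake represented by a finite graph $\Gamma=(V,E)$ consists of $|E|$ closed intervals, one per edge, with endpoints identified according to the incidence structure of $\Gamma$. A piece is a finite union of subintervals of edges; its connected pieces are its path components under the endpoint identifications. The minimal height of a tree is the minimum over all vertices $R$ of the height of the tree rooted at $R$ (the maximum distance from $R$ to any vertex). A valuation is a non-atomic Borel probability measure on the cake. A division between two agents is a pair of pieces $(\alpha,\beta)$ with $\alpha\cup\beta=\Gamma$ and $\alpha\cap\beta$ finite. Given entitlements $(t,1-t)$, $0\le t\le1$, a division is a weighted consensus division if $v_A(\alpha)=v_B(\alpha)=t$ and $v_A(\beta)=v_B(\beta)=1-t$. *)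

theory Defs
  imports "HOL-Analysis.Analysis" "HOL-Probability.Probability"
begin

text \<open>A finite graph is given by a vertex set V and a set E of edges; each edge is
stored once as an ordered pair (u,v) whose first component is its "0-end" and whose
second component is its "1-end" (the orientation is only used to parametrise the
edge by the unit interval).\<close>

definition adj :: "('v \<times> 'v) set \<Rightarrow> ('v \<times> 'v) set" where
  "adj E = {(u, w). (u, w) \<in> E \<or> (w, u) \<in> E}"

definition is_tree :: "'v set \<Rightarrow> ('v \<times> 'v) set \<Rightarrow> bool" where
  "is_tree V E \<longleftrightarrow> finite V \<and> V \<noteq> {} \<and> E \<subseteq> V \<times> V
     \<and> (\<forall>(u, w) \<in> E. u \<noteq> w \<and> (w, u) \<notin> E)
     \<and> (\<forall>u\<in>V. \<forall>w\<in>V. (u, w) \<in> (adj E)\<^sup>*)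
     \<and> card E + 1 = card V"

definition gdist :: "('v \<times> 'v) set \<Rightarrow> 'v \<Rightarrow> 'v \<Rightarrow> nat" where
  "gdist E u w = (LEAST n. (u, w) \<in> (adj E) ^^ n)"

definition height_at :: "'v set \<Rightarrow> ('v \<times> 'v) set \<Rightarrow> 'v \<Rightarrow> nat" where
  "height_at V E R = Max ((\<lambda>w. gdist E R w) ` V)"

definition min_height :: "'v set \<Rightarrow> ('v \<times> 'v) set \<Rightarrow> nat" where
  "min_height V E = Min ((\<lambda>R. height_at V E R) ` V)"

datatype 'v cake_pt = Vtx 'v | Mid "'v \<times> 'v" real

text \<open>Quotient map from the disjoint union of the edge intervals E \<times> [0,1]
to the cake (endpoints identified with the incident vertices).\<close>
definition cpt :: "('v \<times> 'v) \<times> real \<Rightarrow> 'v cake_pt" where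
  "cpt p = (if snd p = 0 then Vtx (fst (fst p))
            else if snd p = 1 then Vtx (snd (fst p)) else Mid (fst p) (snd p))"

definition quotient_topology :: "'a topology \<Rightarrow> ('a \<Rightarrow> 'b) \<Rightarrow> 'b topology" where
  "quotient_topology X f =
     topology (\<lambda>U. U \<subseteq> f ` topspace X \<and> openin X {x \<in> topspace X. f x \<in> U})"

lemma istopology_quotient:
  "istopology (\<lambda>U. U \<subseteq> f ` topspace X \<and> openin X {x \<in> topspace X. f x \<in> U})"
  unfolding istopology_def
proof (rule conjI; intro allI impI)
  fix S T assume "S \<subseteq> f ` topspace X \<and> openin X {x \<in> topspace X. f x \<in> S}"
    "T \<subseteq> f ` topspace X \<and> openin X {x \<in> topspace X. f x \<in> T}"
  moreover have "{x \<in> topspace X. f x \<in> S \<inter> T} =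
      {x \<in> topspace X. f x \<in> S} \<inter> {x \<in> topspace X. f x \<in> T}" by auto
  ultimately show "S \<inter> T \<subseteq> f ` topspace X \<and> openin X {x \<in> topspace X. f x \<in> S \<inter> T}"
    by (simp add: openin_Int le_infI1)
next
  fix K assume K: "\<forall>S\<in>K. S \<subseteq> f ` topspace X \<and> openin X {x \<in> topspace X. f x \<in> S}"
  have "{x \<in> topspace X. f x \<in> \<Union>K} = (\<Union>S\<in>K. {x \<in> topspace X. f x \<in> S})" by auto
  with K show "\<Union>K \<subseteq> f ` topspace X \<and> openin X {x \<in> topspace X. f x \<in> \<Union>K}"
    by auto
qed

definition edges_top :: "('v \<times> 'v) set \<Rightarrow> (('v \<times> 'v) \<times> real) topology" where
  "edges_top E = subtopology (prod_topology (discrete_topology E) euclideanreal) (E \<times> {0..1})"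

definition cake_top :: "('v \<times> 'v) set \<Rightarrow> 'v cake_pt topology" where
  "cake_top E = quotient_topology (edges_top E) cpt"

definition cake :: "('v \<times> 'v) set \<Rightarrow> 'v cake_pt set" where
  "cake E = topspace (cake_top E)"

definition cake_borel :: "('v \<times> 'v) set \<Rightarrow> 'v cake_pt measure" where
  "cake_borel E = sigma (topspace (cake_top E)) {U. openin (cake_top E) U}"

definition valuation :: "('v \<times> 'v) set \<Rightarrow> 'v cake_pt measure \<Rightarrow> bool" where
  "valuation E M \<longleftrightarrow> sets M = sets (cake_borel E) \<and> space M = cake E \<and> prob_space M
     \<and> (\<forall>x \<in> space M. emeasure M {x} = 0)"

text \<open>A piece is a finite union of (closed, nondegenerate) subintervals of edges.
It is described by a finite set of triples (e, a, b) standing for the subinterval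
[a,b] of edge e.\<close>
definition piece_desc :: "('v \<times> 'v) set \<Rightarrow> (('v \<times> 'v) \<times> real \<times> real) set \<Rightarrow> bool" where
  "piece_desc E P \<longleftrightarrow> finite P \<and> (\<forall>(e, a, b) \<in> P. e \<in> E \<and> 0 \<le> a \<and> a < b \<and> b \<le> 1)"

definition piece_set :: "(('v \<times> 'v) \<times> real \<times> real) set \<Rightarrow> 'v cake_pt set" where
  "piece_set P = cpt ` (\<Union>(e, a, b) \<in> P. {e} \<times> {a..b})"

definition is_piece :: "('v \<times> 'v) set \<Rightarrow> 'v cake_pt set \<Rightarrow> bool" where
  "is_piece E S \<longleftrightarrow> (\<exists>P. piece_desc E P \<and> S = piece_set P)"

definition num_components :: "('v \<times> 'v) set \<Rightarrow> 'v cake_pt set \<Rightarrow> nat" where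
  "num_components E S = card (path_components_of (subtopology (cake_top E) S))"

definition is_division :: "('v \<times> 'v) set \<Rightarrow> 'v cake_pt set \<Rightarrow> 'v cake_pt set \<Rightarrow> bool" where
  "is_division E \<alpha> \<beta> \<longleftrightarrow> is_piece E \<alpha> \<and> is_piece E \<beta> \<and> \<alpha> \<union> \<beta> = cake E \<and> finite (\<alpha> \<inter> \<beta>)"

definition weighted_consensus ::
  "'v cake_pt measure \<Rightarrow> 'v cake_pt measure \<Rightarrow> real \<Rightarrow> 'v cake_pt set \<Rightarrow> 'v cake_pt set \<Rightarrow> bool" where
  "weighted_consensus vA vB t \<alpha> \<beta> \<longleftrightarrow>
     measure vA \<alpha> = t \<and> measure vB \<alpha> = t \<and> measure vA \<beta> = 1 - t \<and> measure vB \<beta> = 1 - t"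

end

theory Submission
  imports Defs "HOL-Library.List_Lexorder" "HOL-Library.Sublist"
begin

text \<open>Root the tree at a centre \<open>R\<close>, so that every vertex has depth at most \<open>h\<close>. Listing the
  edges in depth-first order and laying edge \<open>k\<close> out on \<open>[k, k + 1]\<close>, from its parent end to its
  child end, parametrises the cake by \<open>[0, L]\<close>. Along this parametrisation the distribution
  functions of both valuations are continuous and increase from 0 to 1, so a chord argument
  yields an interval \<open>[x, y]\<close> carrying the same mass, \<open>t\<close> or \<open>1 - t\<close>, for both agents. Every point
  of the part of the cake over \<open>[x, y]\<close> is joined inside it to one of at most \<open>h + 1\<close> points
  of a root path; the complement, lying over \<open>[0, x]\<close> and \<open>[y, L]\<close>, is joined to the root and
  to such points. So both pieces have at most \<open>h + 1\<close> components.\<close>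

section \<open>Common increments of two distribution functions\<close>

lemma continuous_on_zero_between:
  fixes d :: "real \<Rightarrow> real"
  assumes "continuous_on S d" "connected S" "a \<in> S" "b \<in> S" "d a \<le> 0" "0 \<le> d b"
  shows "\<exists>s\<in>S. d s = 0"
proof -
  have "connected (d ` S)" using assms(1,2) by (rule connected_continuous_image)
  then have "0 \<in> d ` S" using connectedD_interval[of "d ` S" "d a" "d b" 0] assms(3-6) by blast
  then show ?thesis by auto
qed

lemma continuous_on_rotation_displacement:
  fixes h :: "real \<Rightarrow> real"
  assumes cont: "continuous_on {0..1} h" and h01: "h 0 = h 1" and t: "0 \<le> t" "t \<le> 1"
  shows "continuous_on {0..1} (\<lambda>s. if s \<le> 1 - t then h (s + t) - h s else h (s + t - 1) - h s)"
proof (rule continuous_on_cases_le)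
  show "continuous_on {s \<in> {0..1}. s \<le> 1 - t} (\<lambda>s. h (s + t) - h s)"
    using t by (intro continuous_on_diff continuous_on_compose2[OF cont] continuous_on_subset[OF cont]
        continuous_intros) auto
  show "continuous_on {s \<in> {0..1}. 1 - t \<le> s} (\<lambda>s. h (s + t - 1) - h s)"
    using t by (intro continuous_on_diff continuous_on_compose2[OF cont] continuous_on_subset[OF cont]
        continuous_intros) auto
qed (use h01 in \<open>auto intro: continuous_on_id\<close>)

text \<open>Rotating the circle \<open>[0,1]/(0 \<sim> 1)\<close> by \<open>t\<close>, the displacement \<open>h (s + t) - h s\<close> is
  \<open>\<le> 0\<close> at a maximum of \<open>h\<close> and \<open>\<ge> 0\<close> at a minimum, hence vanishes somewhere; a chord that
  wraps around the circle has length \<open>1 - t\<close>.\<close>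

lemma periodic_chord:
  fixes h :: "real \<Rightarrow> real"
  assumes cont: "continuous_on {0..1} h" and h01: "h 0 = h 1" and t: "0 \<le> t" "t \<le> 1"
  shows "\<exists>s1 s2. 0 \<le> s1 \<and> s1 \<le> s2 \<and> s2 \<le> 1 \<and> h s1 = h s2 \<and> (s2 - s1 = t \<or> s2 - s1 = 1 - t)"
proof -
  define d where "d s = (if s \<le> 1 - t then h (s + t) - h s else h (s + t - 1) - h s)" for s
  have dc: "continuous_on {0..1} d"
    unfolding d_def using continuous_on_rotation_displacement[OF cont h01 t] .
  obtain sM where sM: "sM \<in> {0..1}" "\<And>y. y \<in> {0..1} \<Longrightarrow> h y \<le> h sM"
    using continuous_attains_sup[OF compact_Icc _ cont] by fastforce
  obtain sm where sm: "sm \<in> {0..1}" "\<And>y. y \<in> {0..1} \<Longrightarrow> h sm \<le> h y"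
    using continuous_attains_inf[OF compact_Icc _ cont] by fastforce
  have "d sM \<le> 0" "0 \<le> d sm" using sM sm t unfolding d_def by (auto intro!: sM(2) sm(2))
  then obtain s where s: "s \<in> {0..1}" "d s = 0"
    using continuous_on_zero_between[OF dc connected_Icc sM(1) sm(1)] by blast
  show ?thesis
  proof (cases "s \<le> 1 - t")
    case True
    then show ?thesis using s t unfolding d_def by (intro exI[of _ s] exI[of _ "s + t"]) auto
  next
    case False
    then show ?thesis using s t unfolding d_def by (intro exI[of _ "s + t - 1"] exI[of _ s]) auto
  qed
qed

lemma strict_mono_on_inverse:
  fixes F :: "real \<Rightarrow> real"
  assumes L: "L > 0" and cont: "continuous_on {0..L} F" and sm: "strict_mono_on {0..L} F"
    and F0: "F 0 = 0" and FL: "F L = 1"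
  obtains q where "continuous_on {0..1} q" "q 0 = 0" "q 1 = L"
    "\<And>s. s \<in> {0..1} \<Longrightarrow> q s \<in> {0..L} \<and> F (q s) = s"
proof
  have inj: "inj_on F {0..L}" using sm strict_mono_on_imp_inj_on by blast
  have mono: "F x \<in> {0..1}" if "x \<in> {0..L}" for x
  proof -
    have "F 0 \<le> F x" using that sm L
      by (cases "x = 0") (auto simp: strict_mono_on_def intro: less_imp_le)
    moreover have "F x \<le> F L" using that sm L
      by (cases "x = L") (auto simp: strict_mono_on_def intro: less_imp_le)
    ultimately show ?thesis using F0 FL by simp
  qed
  have img: "F ` {0..L} = {0..1}"
  proof
    show "{0..1} \<subseteq> F ` {0..L}"
      using IVT'[of F 0 _ L] cont F0 FL L by (fastforce simp: image_iff)
  qed (use mono in auto)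
  define q where "q = the_inv_into {0..L} F"
  show "continuous_on {0..1} q"
    using continuous_on_inv_into[OF cont compact_Icc inj] img unfolding q_def by simp
  show "q 0 = 0" "q 1 = L"
    using the_inv_into_f_f[OF inj, of 0] the_inv_into_f_f[OF inj, of L] F0 FL L
      unfolding q_def by auto
  show "q s \<in> {0..L} \<and> F (q s) = s" if "s \<in> {0..1}" for s
    using the_inv_into_into[OF inj, of s "{0..L}"] f_the_inv_into_f[OF inj, of s] img that
    unfolding q_def by auto
qed

text \<open>Reparametrising by the strictly increasing \<open>FA\<close> turns \<open>FB - FA\<close> into a closed curve
  on \<open>[0,1]\<close>, to which the chord lemma above applies.\<close>

lemma strict_mono_common_increment:
  fixes FA FB :: "real \<Rightarrow> real" and L t :: real
  assumes L: "L > 0" and cA: "continuous_on {0..L} FA" and cB: "continuous_on {0..L} FB"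
    and sm: "strict_mono_on {0..L} FA" and A0: "FA 0 = 0" and A1: "FA L = 1"
    and B0: "FB 0 = 0" and B1: "FB L = 1" and t: "0 \<le> t" "t \<le> 1"
  shows "\<exists>x y. 0 \<le> x \<and> x \<le> y \<and> y \<le> L \<and> FA y - FA x = FB y - FB x
              \<and> (FA y - FA x = t \<or> FA y - FA x = 1 - t)"
proof -
  obtain q where qc: "continuous_on {0..1} q" and q0: "q 0 = 0" and q1: "q 1 = L"
    and q: "\<And>s. s \<in> {0..1} \<Longrightarrow> q s \<in> {0..L} \<and> FA (q s) = s"
    using strict_mono_on_inverse[OF L cA sm A0 A1] by blast
  define h where "h s = FB (q s) - s" for s
  have hc: "continuous_on {0..1} h"
    unfolding h_def by (intro continuous_on_diff continuous_on_id continuous_on_compose2[OF cB qc])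
      (use q in auto)
  have h01: "h 0 = h 1" using q0 q1 B0 B1 unfolding h_def by simp
  obtain s1 s2 where s: "0 \<le> s1" "s1 \<le> s2" "s2 \<le> 1" "h s1 = h s2" "s2 - s1 = t \<or> s2 - s1 = 1 - t"
    using periodic_chord[OF hc h01 t] by blast
  have qs: "q s1 \<in> {0..L}" "q s2 \<in> {0..L}" "FA (q s1) = s1" "FA (q s2) = s2" using q s by auto
  have "q s1 \<le> q s2"
  proof (rule ccontr)
    assume "\<not> q s1 \<le> q s2"
    then have "FA (q s2) < FA (q s1)" using strict_mono_onD[OF sm qs(2,1)] by simp
    then show False using qs s by auto
  qed
  then show ?thesis
    using qs s unfolding h_def by (intro exI[of _ "q s1"] exI[of _ "q s2"]) auto
qed

definition tilt :: "(real \<Rightarrow> real) \<Rightarrow> real \<Rightarrow> real \<Rightarrow> real \<Rightarrow> real" where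
  "tilt G L \<epsilon> x = (G x + \<epsilon> * x / L) / (1 + \<epsilon>)"

lemma tilt_strict_mono:
  fixes G :: "real \<Rightarrow> real"
  assumes L: "L > 0" and \<epsilon>: "\<epsilon> > 0" and cont: "continuous_on {0..L} G" and mono: "mono_on {0..L} G"
    and G0: "G 0 = 0" and GL: "G L = 1"
  shows "continuous_on {0..L} (tilt G L \<epsilon>)" "strict_mono_on {0..L} (tilt G L \<epsilon>)"
    "tilt G L \<epsilon> 0 = 0" "tilt G L \<epsilon> L = 1"
proof -
  show "continuous_on {0..L} (tilt G L \<epsilon>)"
    unfolding tilt_def using \<epsilon> L by (intro continuous_intros cont) auto
  show "strict_mono_on {0..L} (tilt G L \<epsilon>)"
  proof (rule strict_mono_onI)
    fix r s assume rs: "r \<in> {0..L}" "s \<in> {0..L}" "r < s"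
    have "G r \<le> G s" using mono rs by (auto simp: mono_on_def)
    moreover have "\<epsilon> * r / L < \<epsilon> * s / L" using rs \<epsilon> L by (simp add: divide_strict_right_mono)
    ultimately show "tilt G L \<epsilon> r < tilt G L \<epsilon> s"
      unfolding tilt_def using \<epsilon> by (simp add: divide_strict_right_mono)
  qed
  show "tilt G L \<epsilon> 0 = 0" "tilt G L \<epsilon> L = 1" unfolding tilt_def using G0 GL L \<epsilon> by auto
qed

lemma tendsto_tilt:
  fixes G :: "real \<Rightarrow> real"
  assumes L: "L > 0" and cont: "continuous_on {0..L} G" and \<epsilon>: "\<epsilon> \<longlonglongrightarrow> 0"
    and x: "x \<longlonglongrightarrow> x0" "\<And>n. x n \<in> {0..L}" "x0 \<in> {0..L}"
  shows "(\<lambda>n. tilt G L (\<epsilon> n) (x n)) \<longlonglongrightarrow> G x0"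
proof -
  have "(\<lambda>n. G (x n)) \<longlonglongrightarrow> G x0" using continuous_on_tendsto_compose[OF cont x(1,3)] x(2) by auto
  then have "(\<lambda>n. tilt G L (\<epsilon> n) (x n)) \<longlonglongrightarrow> (G x0 + 0 * x0 / L) / (1 + 0)"
    unfolding tilt_def using L by (intro tendsto_intros \<epsilon> x(1)) auto
  then show ?thesis by simp
qed

text \<open>Monotone case by approximation: the strictly increasing tilts of \<open>GA\<close> and \<open>GB\<close> have common
  increments, and a limit point of the
  corresponding intervals works for \<open>GA\<close> and \<open>GB\<close> themselves.\<close>

lemma mono_common_increment:
  fixes GA GB :: "real \<Rightarrow> real" and L t :: real
  assumes L: "L > 0" and cA: "continuous_on {0..L} GA" and cB: "continuous_on {0..L} GB"
    and mA: "mono_on {0..L} GA" and mB: "mono_on {0..L} GB" and A0: "GA 0 = 0" and A1: "GA L = 1"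
    and B0: "GB 0 = 0" and B1: "GB L = 1" and t: "0 \<le> t" "t \<le> 1"
  shows "\<exists>x y. 0 \<le> x \<and> x \<le> y \<and> y \<le> L \<and> GA y - GA x = GB y - GB x
              \<and> (GA y - GA x = t \<or> GA y - GA x = 1 - t)"
proof -
  define \<epsilon> :: "nat \<Rightarrow> real" where "\<epsilon> n = 1 / Suc n" for n
  define inc where "inc G n x y = tilt G L (\<epsilon> n) y - tilt G L (\<epsilon> n) x" for G n x y
  have "\<exists>x y. 0 \<le> x \<and> x \<le> y \<and> y \<le> L \<and> inc GA n x y = inc GB n x y \<and> inc GA n x y \<in> {t, 1 - t}" for n
  proof -
    have "\<epsilon> n > 0" unfolding \<epsilon>_def by simp
    from tilt_strict_mono[OF L this cA mA A0 A1] tilt_strict_mono[OF L this cB mB B0 B1]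
    show ?thesis using strict_mono_common_increment[OF L _ _ _ _ _ _ _ t] unfolding inc_def by auto
  qed
  then obtain x y where xy: "\<And>n. 0 \<le> x n \<and> x n \<le> y n \<and> y n \<le> L"
    and inc: "\<And>n. inc GA n (x n) (y n) = inc GB n (x n) (y n) \<and> inc GA n (x n) (y n) \<in> {t, 1 - t}"
    by metis
  have xyL: "x n \<in> {0..L}" "y n \<in> {0..L}" for n using xy[of n] by auto
  then have "\<forall>n. (x n, y n) \<in> {0..L} \<times> {0..L}" by simp
  then obtain l r where l: "l \<in> {0..L} \<times> {0..L}" and r: "strict_mono r"
    and lim: "((\<lambda>n. (x n, y n)) \<circ> r) \<longlonglongrightarrow> l"
    by (rule seq_compactE[OF compact_imp_seq_compact[OF compact_Times[OF compact_Icc compact_Icc]]])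
  define x0 y0 where "x0 = fst l" and "y0 = snd l"
  have x0: "(x \<circ> r) \<longlonglongrightarrow> x0" and y0: "(y \<circ> r) \<longlonglongrightarrow> y0"
    using tendsto_fst[OF lim] tendsto_snd[OF lim] unfolding x0_def y0_def by (simp_all add: o_def)
  have "\<epsilon> \<longlonglongrightarrow> 0" unfolding \<epsilon>_def using LIMSEQ_inverse_real_of_nat by (simp add: inverse_eq_divide)
  then have \<epsilon>0: "(\<epsilon> \<circ> r) \<longlonglongrightarrow> 0" using LIMSEQ_subseq_LIMSEQ[OF _ r] by blast
  have inc_lim: "(\<lambda>n. inc G (r n) (x (r n)) (y (r n))) \<longlonglongrightarrow> G y0 - G x0"
    if "continuous_on {0..L} G" for G
    unfolding inc_def using l xyL x0_def y0_def
    by (intro tendsto_diff tendsto_tilt[OF L that \<epsilon>0[unfolded o_def]]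
        x0[unfolded o_def] y0[unfolded o_def]) (auto simp: mem_Times_iff)
  have eq: "GA y0 - GA x0 = GB y0 - GB x0"
    using LIMSEQ_unique[OF inc_lim[OF cA]] inc_lim[OF cB] inc by simp
  have "\<forall>n. inc GA (r n) (x (r n)) (y (r n)) \<in> {t, 1 - t}" using inc by blast
  then have "GA y0 - GA x0 \<in> {t, 1 - t}"
    by (intro Lim_in_closed_set[OF _ always_eventually sequentially_bot inc_lim[OF cA]]) simp
  then have tt: "GA y0 - GA x0 = t \<or> GA y0 - GA x0 = 1 - t" by simp
  have le: "x0 \<le> y0" using LIMSEQ_le[OF x0 y0] xy by (auto simp: o_def)
  have bounds: "0 \<le> x0" "y0 \<le> L" using l unfolding x0_def y0_def by (auto simp: mem_Times_iff)
  show ?thesis by (intro exI[of _ x0] exI[of _ y0] conjI bounds le eq tt)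
qed

section \<open>Rooted trees in depth-first order\<close>

lemma strict_prefix_imp_less: "strict_prefix p r \<Longrightarrow> p < (r :: 'a :: linorder list)"
proof (induction p arbitrary: r)
  case Nil then show ?case by (cases r) auto
next
  case (Cons a p) then show ?case by (cases r) auto
qed

lemma prefix_between_lex: "prefix p r \<Longrightarrow> p \<le> q \<Longrightarrow> q \<le> (r :: 'a :: linorder list) \<Longrightarrow> prefix p q"
proof (induction p arbitrary: q r)
  case Nil then show ?case by simp
next
  case (Cons a p)
  then obtain r' where r: "r = a # r'" "prefix p r'" by (cases r) auto
  from Cons.prems(2) obtain b q' where q: "q = b # q'" by (cases q) auto
  from Cons.prems(2,3) r q have "a = b" "p \<le> q'" "q' \<le> r'" by auto
  with Cons.IH r q show ?case by auto
qed

lemma min_height_attained: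
  assumes "is_tree V E"
  obtains R where "R \<in> V" "height_at V E R = min_height V E"
proof -
  have "finite V" "V \<noteq> {}" using assms unfolding is_tree_def by auto
  then have "min_height V E \<in> (\<lambda>R. height_at V E R) ` V"
    unfolding min_height_def by (intro Min_in) auto
  then show thesis using that by auto
qed

locale rooted_tree =
  fixes V :: "'v set" and E :: "('v \<times> 'v) set" and R :: 'v
  assumes tree: "is_tree V E" and R: "R \<in> V"
begin

lemma finite_V:
  "finite V" and E_subset: "E \<subseteq> V \<times> V" and connected_V: "\<And>u w. u \<in> V \<Longrightarrow> w \<in> V \<Longrightarrow> (u, w) \<in> (adj E)\<^sup>*"
  and card_E: "card E + 1 = card V"
  using tree unfolding is_tree_def by auto

lemma finite_E: "finite E" using finite_subset[OF E_subset] finite_V by blast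

lemma adj_subset: "adj E \<subseteq> V \<times> V" using E_subset unfolding adj_def by auto

definition depth :: "'v \<Rightarrow> nat" where "depth w = gdist E R w"

lemma depth_walk: "w \<in> V \<Longrightarrow> (R, w) \<in> adj E ^^ depth w"
proof -
  assume "w \<in> V"
  then obtain n where "(R, w) \<in> adj E ^^ n" using connected_V[OF R] rtrancl_power by blast
  then show ?thesis unfolding depth_def gdist_def by (rule LeastI)
qed

lemma depth_le_walk: "(R, w) \<in> adj E ^^ n \<Longrightarrow> depth w \<le> n"
  unfolding depth_def gdist_def by (rule Least_le)

lemma depth_root: "depth R = 0" using depth_le_walk[of R 0] by simp

lemma depth_eq_0_imp_root: "w \<in> V \<Longrightarrow> depth w = 0 \<Longrightarrow> w = R"
  using depth_walk[of w] by simp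

lemma parent_exists: assumes "w \<in> V" "w \<noteq> R"
  shows "\<exists>u. u \<in> V \<and> Suc (depth u) = depth w \<and> (u, w) \<in> adj E"
proof -
  obtain m where m: "depth w = Suc m" using depth_eq_0_imp_root assms by (cases "depth w") auto
  then have "(R, w) \<in> adj E ^^ Suc m" using depth_walk assms by metis
  then obtain u where u: "(R, u) \<in> adj E ^^ m" "(u, w) \<in> adj E" by (rule relpow_Suc_E)
  have uV: "u \<in> V" using u(2) adj_subset by auto
  have "depth u \<le> m" using depth_le_walk u by auto
  moreover have "\<not> depth u < m"
  proof
    assume "depth u < m"
    have "(R, w) \<in> adj E ^^ Suc (depth u)" using depth_walk[OF uV] u(2) by auto
    then have "depth w \<le> Suc (depth u)" by (rule depth_le_walk)
    with \<open>depth u < m\<close> m show False by auto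
  qed
  ultimately show ?thesis using uV u m by (intro exI[of _ u]) auto
qed

definition parent :: "'v \<Rightarrow> 'v" where
  "parent w = (SOME u. u \<in> V \<and> Suc (depth u) = depth w \<and> (u, w) \<in> adj E)"

lemma parent: assumes "w \<in> V" "w \<noteq> R"
  shows "parent w \<in> V" "Suc (depth (parent w)) = depth w" "(parent w, w) \<in> adj E"
  using someI_ex[OF parent_exists[OF assms]] unfolding parent_def by auto

lemma parent_neq: "w \<in> V \<Longrightarrow> w \<noteq> R \<Longrightarrow> parent w \<noteq> w"
  using parent(2) by fastforce

definition parent_edge :: "'v \<Rightarrow> 'v \<times> 'v" where
  "parent_edge w = (if (parent w, w) \<in> E then (parent w, w) else (w, parent w))"

lemma parent_edge_in_E: "w \<in> V \<Longrightarrow> w \<noteq> R \<Longrightarrow> parent_edge w \<in> E"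
  using parent(3) unfolding parent_edge_def adj_def by auto

lemma parent_edge_cases: "parent_edge w = (parent w, w) \<or> parent_edge w = (w, parent w)"
  unfolding parent_edge_def by auto

lemma inj_on_parent_edge: "inj_on parent_edge (V - {R})"
proof (rule inj_onI)
  fix u w assume u: "u \<in> V - {R}" and w: "w \<in> V - {R}" and eq: "parent_edge u = parent_edge w"
  have du: "Suc (depth (parent u)) = depth u" and dw: "Suc (depth (parent w)) = depth w"
    using parent u w by auto
  show "u = w"
    using parent_edge_cases[of u] parent_edge_cases[of w] eq du dw by auto
qed

lemma parent_edge_image: "parent_edge ` (V - {R}) = E"
proof -
  have sub: "parent_edge ` (V - {R}) \<subseteq> E" using parent_edge_in_E by blast
  have "card (parent_edge ` (V - {R})) = card (V - {R})" using card_image[OF inj_on_parent_edge] .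
  also have "\<dots> = card E" using card_E R finite_V by auto
  finally show ?thesis using card_subset_eq[OF finite_E sub] by auto
qed

definition vertex_code :: "'v \<Rightarrow> nat" where "vertex_code = (SOME f. inj_on f V)"

lemma inj_on_vertex_code: "inj_on vertex_code V"
proof -
  obtain f :: "'v \<Rightarrow> nat" where "inj_on f V" using finite_imp_inj_to_nat_seg[OF finite_V] by metis
  then show ?thesis unfolding vertex_code_def by (rule someI[where P="\<lambda>f. inj_on f V"])
qed

text \<open>Sorting the non-root vertices lexicographically by their labels gives a depth-first order:
  every vertex comes after its parent and every subtree occupies a contiguous block.\<close>

definition path_label :: "'v \<Rightarrow> nat list" where
  "path_label w = map (\<lambda>i. vertex_code ((parent ^^ (depth w - 1 - i)) w)) [0..<depth w]"

lemma length_path_label: "length (path_label w) = depth w" unfolding path_label_def by simp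

lemma path_label_root: "path_label R = []" unfolding path_label_def using depth_root by simp

lemma path_label_parent: assumes "w \<in> V" "w \<noteq> R"
  shows "path_label w = path_label (parent w) @ [vertex_code w]"
proof -
  obtain m where m: "depth w = Suc m" "depth (parent w) = m" using parent(2)[OF assms] by (metis)
  have "path_label w = map (\<lambda>i. vertex_code ((parent ^^ (Suc m - 1 - i)) w)) ([0..<m] @ [m])"
    unfolding path_label_def m by simp
  also have "\<dots> = map (\<lambda>i. vertex_code ((parent ^^ (m - 1 - i)) (parent w))) [0..<m] @ [vertex_code w]"
  proof -
    have "(parent ^^ (Suc m - 1 - i)) w = (parent ^^ (m - 1 - i)) (parent w)" if "i < m" for i
    proof -
      have "Suc m - 1 - i = Suc (m - 1 - i)" using that by auto
      then show ?thesis by (simp add: funpow_Suc_right del: funpow.simps)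
    qed
    then show ?thesis by simp
  qed
  also have "\<dots> = path_label (parent w) @ [vertex_code w]" unfolding path_label_def m by simp
  finally show ?thesis .
qed

lemma inj_on_path_label: "inj_on path_label V"
proof (rule inj_onI)
  fix u w assume u: "u \<in> V" and w: "w \<in> V" and eq: "path_label u = path_label w"
  show "u = w"
  proof (cases "u = R \<or> w = R")
    case True
    then have "depth u = 0 \<or> depth w = 0" using depth_root by auto
    then have "depth u = 0 \<and> depth w = 0" using length_path_label eq by metis
    then show ?thesis using depth_eq_0_imp_root u w by auto
  next
    case False
    then have "vertex_code u = vertex_code w"
      using path_label_parent[of u] path_label_parent[of w] u w eq by auto
    then show ?thesis using inj_on_vertex_code u w by (auto dest: inj_onD)
  qed
qed

lemma path_label_parent_less: "w \<in> V \<Longrightarrow> w \<noteq> R \<Longrightarrow> path_label (parent w) < path_label w"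
  using path_label_parent by (intro strict_prefix_imp_less) (auto simp: strict_prefix_def)

definition sorted_labels :: "nat list list"
  where "sorted_labels = sorted_list_of_set (path_label ` (V - {R}))"
definition dfs_order :: "'v list"
  where "dfs_order = map (the_inv_into (V - {R}) path_label) sorted_labels"
definition L :: nat where "L = length dfs_order"

lemma inj_on_path_label_nonroot: "inj_on path_label (V - {R})"
  using inj_on_path_label by (rule inj_on_subset) auto

lemma set_sorted_labels: "set sorted_labels = path_label ` (V - {R})" unfolding sorted_labels_def
  using finite_V by simp
lemma sorted_labels_sorted: "sorted_wrt (<) sorted_labels"
  unfolding sorted_labels_def by (rule strict_sorted_list_of_set)
lemma L_eq_length_sorted_labels: "L = length sorted_labels" unfolding L_def dfs_order_def by simp

lemma dfs_order_nth:
  "k < L \<Longrightarrow> dfs_order ! k \<in> V - {R} \<and> path_label (dfs_order ! k) = sorted_labels ! k"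
proof -
  assume k: "k < L"
  then have "sorted_labels ! k \<in> path_label ` (V - {R})"
    using set_sorted_labels L_eq_length_sorted_labels nth_mem by metis
  then obtain x where x: "x \<in> V - {R}" "sorted_labels ! k = path_label x" by auto
  have "the_inv_into (V - {R}) path_label (path_label x) = x"
    using the_inv_into_f_f[OF inj_on_path_label_nonroot x(1)] .
  then show ?thesis unfolding dfs_order_def using k L_eq_length_sorted_labels x by auto
qed

lemma dfs_order_in_V:
  "k < L \<Longrightarrow> dfs_order ! k \<in> V" and dfs_order_neq_root: "k < L \<Longrightarrow> dfs_order ! k \<noteq> R"
  using dfs_order_nth by auto

lemma path_label_dfs_mono: "i < j \<Longrightarrow> j < L \<Longrightarrow> path_label (dfs_order ! i) < path_label (dfs_order ! j)"
  using sorted_labels_sorted dfs_order_nth L_eq_length_sorted_labels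
    by (simp add: sorted_wrt_iff_nth_less)

lemma dfs_order_inj: "i < L \<Longrightarrow> j < L \<Longrightarrow> dfs_order ! i = dfs_order ! j \<Longrightarrow> i = j"
  using path_label_dfs_mono[of i j] path_label_dfs_mono[of j i]
    by (cases i j rule: linorder_cases) auto

lemma dfs_index_less_of_label_less:
  "i < L \<Longrightarrow> j < L \<Longrightarrow> path_label (dfs_order ! i) < path_label (dfs_order ! j) \<Longrightarrow> i < j"
  using path_label_dfs_mono[of j i] by (cases i j rule: linorder_cases) auto

lemma dfs_order_surj: assumes "u \<in> V" "u \<noteq> R" shows "\<exists>k<L. dfs_order ! k = u"
proof -
  have "path_label u \<in> set sorted_labels" using set_sorted_labels assms by auto
  then obtain k where k: "k < L" "sorted_labels ! k = path_label u"
    using L_eq_length_sorted_labels by (metis in_set_conv_nth)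
  then have "path_label (dfs_order ! k) = path_label u" using dfs_order_nth by auto
  then have "dfs_order ! k = u"
    using inj_on_path_label dfs_order_in_V[OF k(1)] assms(1) by (auto dest: inj_onD)
  then show ?thesis using k by auto
qed

lemma L_eq_card_E: "L = card E"
proof -
  have "L = card (path_label ` (V - {R}))"
    using L_eq_length_sorted_labels unfolding sorted_labels_def by simp
  also have "\<dots> = card (V - {R})" by (rule card_image[OF inj_on_path_label_nonroot])
  also have "\<dots> = card E" using card_E R finite_V by auto
  finally show ?thesis .
qed

lemma depth_le_height_at: "w \<in> V \<Longrightarrow> depth w \<le> height_at V E R"
  unfolding depth_def height_at_def using finite_V by (intro Max_ge) auto

lemma L_pos:
  assumes "0 < height_at V E R"
  shows "0 < L"
proof (rule ccontr)
  assume "\<not> 0 < L"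
  then have "card V = 1" using L_eq_card_E card_E by simp
  then have "V = {R}" using R finite_V by (metis card_1_singletonE singletonD)
  then show False using assms depth_root unfolding height_at_def depth_def by simp
qed

lemma parent_precedes: assumes "k < L"
  shows "parent (dfs_order ! k) = R \<or> (\<exists>k'<k. parent (dfs_order ! k) = dfs_order ! k')"
proof (cases "parent (dfs_order ! k) = R")
  case False
  have pV: "parent (dfs_order ! k) \<in> V" using parent dfs_order_in_V dfs_order_neq_root assms by auto
  obtain k' where k': "k' < L" "dfs_order ! k' = parent (dfs_order ! k)"
    using dfs_order_surj[OF pV False] by auto
  have "path_label (dfs_order ! k') < path_label (dfs_order ! k)"
    using k' path_label_parent_less dfs_order_in_V dfs_order_neq_root assms by auto
  then have "k' < k" using dfs_index_less_of_label_less k' assms by auto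
  then show ?thesis using k' by auto
qed simp

lemma subtree_contiguous:
  assumes "k' \<le> k0" "k0 \<le> k" "k < L" "prefix (path_label (dfs_order ! k')) (path_label (dfs_order ! k))"
  shows "prefix (path_label (dfs_order ! k')) (path_label (dfs_order ! k0))"
proof -
  have "path_label (dfs_order ! k') \<le> path_label (dfs_order ! k0)"
    using path_label_dfs_mono[of k' k0] assms by (cases "k' = k0") auto
  moreover have "path_label (dfs_order ! k0) \<le> path_label (dfs_order ! k)"
    using path_label_dfs_mono[of k0 k] assms by (cases "k0 = k") auto
  ultimately show ?thesis using prefix_between_lex assms(4) by blast
qed

end

section \<open>The cake laid out on an interval\<close>

lemma openin_quotient_topology:
  "openin (quotient_topology X f) U \<longleftrightarrow> U \<subseteq> f ` topspace X \<and> openin X {x \<in> topspace X. f x \<in> U}"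
  unfolding quotient_topology_def topology_inverse'[OF istopology_quotient] by (rule refl)

lemma topspace_quotient_topology: "topspace (quotient_topology X f) = f ` topspace X"
proof -
  have "{x \<in> topspace X. f x \<in> f ` topspace X} = topspace X" by auto
  then have "openin (quotient_topology X f) (f ` topspace X)"
    unfolding openin_quotient_topology by simp
  then have "f ` topspace X \<subseteq> topspace (quotient_topology X f)" by (rule openin_subset)
  moreover have "topspace (quotient_topology X f) \<subseteq> f ` topspace X"
    by (auto simp: topspace_def openin_quotient_topology)
  ultimately show ?thesis by (rule subset_antisym[rotated])
qed

lemma closedin_quotient_topology:
  "closedin (quotient_topology X f) C \<longleftrightarrow> C \<subseteq> f ` topspace X \<and> closedin X {x \<in> topspace X. f x \<in> C}"
proof -
  have e: "{x \<in> topspace X. f x \<in> f ` topspace X - C} = topspace X - {x \<in> topspace X. f x \<in> C}"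
    by auto
  show ?thesis unfolding closedin_def topspace_quotient_topology openin_quotient_topology e by auto
qed

lemma continuous_map_quotient_topology: "continuous_map X (quotient_topology X f) f"
  unfolding continuous_map_def topspace_quotient_topology
proof (intro conjI allI impI)
  show "f \<in> topspace X \<rightarrow> f ` topspace X" by auto
  fix U assume "openin (quotient_topology X f) U"
  then show "openin X {x \<in> topspace X. f x \<in> U}" unfolding openin_quotient_topology by auto
qed

lemma topspace_edges_top: "topspace (edges_top E) = E \<times> {0..1}"
  unfolding edges_top_def by auto

lemma cake_eq_image_cpt: "cake E = cpt ` (E \<times> {0..1})"
  unfolding cake_def cake_top_def topspace_quotient_topology topspace_edges_top ..

lemma closedin_cake_top_edgewise:
  assumes fin: "finite E" and sub: "C \<subseteq> cake E"
    and cl: "\<And>e. e \<in> E \<Longrightarrow> closed {r \<in> {0..1}. cpt (e, r) \<in> C}"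
  shows "closedin (cake_top E) C"
proof -
  define P where "P = (\<Union>e\<in>E. {e} \<times> {r \<in> {0..1}. cpt (e, r) \<in> C})"
  have "closedin (prod_topology (discrete_topology E) euclideanreal) ({e} \<times> {r \<in> {0..1}. cpt (e, r) \<in> C})"
    if "e \<in> E" for e
  proof -
    have "closedin euclideanreal {r \<in> {0..1}. cpt (e, r) \<in> C}"
      unfolding closed_closedin[symmetric] by (rule cl[OF that])
    then show ?thesis using that by (auto simp: closedin_prod_Times_iff closedin_discrete_topology)
  qed
  then have "closedin (prod_topology (discrete_topology E) euclideanreal) P"
    unfolding P_def using fin by (intro closedin_Union) auto
  then have "closedin (edges_top E) P"
    unfolding edges_top_def P_def by (rule closedin_subset_topspace) auto
  moreover have "{x \<in> topspace (edges_top E). cpt x \<in> C} = P"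
    unfolding topspace_edges_top P_def by auto
  ultimately show ?thesis
    using sub unfolding cake_top_def closedin_quotient_topology cake_eq_image_cpt topspace_edges_top
    by simp
qed

lemma closedin_in_cake_borel: "closedin (cake_top E) C \<Longrightarrow> C \<in> sets (cake_borel E)"
proof -
  assume c: "closedin (cake_top E) C"
  let ?O = "topspace (cake_top E)"
  have A: "{U. openin (cake_top E) U} \<subseteq> Pow ?O" using openin_subset by auto
  have "?O - C \<in> {U. openin (cake_top E) U}" using c unfolding closedin_def by auto
  then have "?O - (?O - C) \<in> sigma_sets ?O {U. openin (cake_top E) U}"
    by (intro sigma_sets.Compl sigma_sets.Basic)
  moreover have "?O - (?O - C) = C" using c closedin_subset by auto
  ultimately show ?thesis unfolding cake_borel_def using sets_measure_of[OF A] by auto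
qed

lemma card_path_components_le:
  assumes "finite T" "\<And>p. p \<in> topspace X \<Longrightarrow> \<exists>q\<in>T. path_component_of X p q"
  shows "card (path_components_of X) \<le> card T"
proof -
  have "path_components_of X \<subseteq> path_component_of_set X ` T"
  proof
    fix C assume "C \<in> path_components_of X"
    then obtain p where p: "p \<in> topspace X" "C = path_component_of_set X p"
      unfolding path_components_of_def by auto
    then obtain q where "q \<in> T" "path_component_of X p q" using assms(2) by blast
    then have "C = path_component_of_set X q" using p path_component_of_equiv by metis
    then show "C \<in> path_component_of_set X ` T" using \<open>q \<in> T\<close> by auto
  qed
  then have "card (path_components_of X) \<le> card (path_component_of_set X ` T)"
    using assms(1) by (intro card_mono) auto
  also have "\<dots> \<le> card T" using assms(1) by (rule card_image_le)
  finally show ?thesis .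
qed

context rooted_tree begin

text \<open>Edge \<open>k\<close> of the layout joins \<open>dfs_order ! k\<close> to its parent and occupies \<open>[k, k + 1]\<close>, the
  parent end at \<open>k\<close>; \<open>point_at k s\<close> is the point at position \<open>s\<close>, and \<open>stretch a b\<close> is the part
  of the cake laid out over \<open>[a, b]\<close>. The coordinate \<open>coord\<close> inverts the layout on edge
  interiors and sends the vertices injectively to negative numbers.\<close>

definition edge_at :: "nat \<Rightarrow> 'v \<times> 'v" where "edge_at k = parent_edge (dfs_order ! k)"
definition reversed :: "nat \<Rightarrow> bool" where "reversed k = (fst (edge_at k) = dfs_order ! k)"
definition orient :: "nat \<Rightarrow> real \<Rightarrow> real" where "orient k r = (if reversed k then 1 - r else r)"
definition point_at :: "nat \<Rightarrow> real \<Rightarrow> 'v cake_pt"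
  where "point_at k s = cpt (edge_at k, orient k (s - real k))"
definition edge_segment :: "nat \<Rightarrow> real \<Rightarrow> real \<Rightarrow> 'v cake_pt set"
  where "edge_segment k a b = point_at k ` {a..b}"
definition stretch :: "real \<Rightarrow> real \<Rightarrow> 'v cake_pt set" where
  "stretch a b = (\<Union>k\<in>{k. k < L \<and> max a (real k) < min b (real k + 1)}.
     edge_segment k (max a (real k)) (min b (real k + 1)))"
definition edge_index :: "'v \<times> 'v \<Rightarrow> nat" where "edge_index e = (THE k. k < L \<and> edge_at k = e)"
definition coord :: "'v cake_pt \<Rightarrow> real" where
  "coord p = (case p of Vtx w \<Rightarrow> -1 - real (vertex_code w)
     | Mid e r \<Rightarrow> real (edge_index e) + orient (edge_index e) r)"
definition vertex_points :: "'v cake_pt set" where "vertex_points = Vtx ` V"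

lemma edge_at_cases:
  "k < L \<Longrightarrow> (\<not> reversed k \<and> edge_at k = (parent (dfs_order ! k), dfs_order ! k))
     \<or> (reversed k \<and> edge_at k = (dfs_order ! k, parent (dfs_order ! k)))"
  using parent_edge_cases[of "dfs_order ! k"] parent_neq[OF dfs_order_in_V dfs_order_neq_root]
    unfolding reversed_def edge_at_def by auto

lemma edge_at_in_E: "k < L \<Longrightarrow> edge_at k \<in> E" unfolding edge_at_def
  using parent_edge_in_E dfs_order_in_V dfs_order_neq_root by auto

lemma edge_at_inj: "i < L \<Longrightarrow> j < L \<Longrightarrow> edge_at i = edge_at j \<Longrightarrow> i = j"
  unfolding edge_at_def using inj_on_parent_edge dfs_order_in_V dfs_order_neq_root dfs_order_inj
    by (metis DiffI inj_onD singletonD)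

lemma edge_at_surj: "e \<in> E \<Longrightarrow> \<exists>k<L. edge_at k = e"
proof -
  assume "e \<in> E"
  then obtain w where w: "w \<in> V - {R}" "e = parent_edge w" using parent_edge_image by auto
  then obtain k where "k < L" "dfs_order ! k = w" using dfs_order_surj by auto
  then show ?thesis using w unfolding edge_at_def by auto
qed

lemma edge_index: "e \<in> E \<Longrightarrow> edge_index e < L \<and> edge_at (edge_index e) = e"
proof -
  assume "e \<in> E"
  then obtain k where k: "k < L" "edge_at k = e" using edge_at_surj by blast
  have "(THE k. k < L \<and> edge_at k = e) = k" using k edge_at_inj by (intro the_equality) auto
  then show ?thesis using k unfolding edge_index_def by auto
qed

lemma edge_index_edge_at: "k < L \<Longrightarrow> edge_index (edge_at k) = k"
  using edge_index[OF edge_at_in_E] edge_at_inj by auto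

lemma orient_inv [simp]: "orient k (orient k r) = r" unfolding orient_def by auto

lemma point_at_left: "k < L \<Longrightarrow> point_at k (real k) = Vtx (parent (dfs_order ! k))"
  using edge_at_cases[of k] unfolding point_at_def orient_def cpt_def by auto

lemma point_at_right: "k < L \<Longrightarrow> point_at k (real k + 1) = Vtx (dfs_order ! k)"
  using edge_at_cases[of k] unfolding point_at_def orient_def cpt_def by auto

lemma point_at_interior:
  "k < L \<Longrightarrow> real k < s \<Longrightarrow> s < real k + 1 \<Longrightarrow> point_at k s = Mid (edge_at k) (orient k (s - real k))"
  unfolding point_at_def orient_def cpt_def by auto

lemma point_at_in_cake: "k < L \<Longrightarrow> real k \<le> s \<Longrightarrow> s \<le> real k + 1 \<Longrightarrow> point_at k s \<in> cake E"
  unfolding cake_eq_image_cpt point_at_def using edge_at_in_E by (auto simp: orient_def)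

lemma cake_point_at: "p \<in> cake E \<Longrightarrow> \<exists>k<L. \<exists>s. real k \<le> s \<and> s \<le> real k + 1 \<and> p = point_at k s"
proof -
  assume "p \<in> cake E"
  then obtain e r where er: "e \<in> E" "0 \<le> r" "r \<le> 1" "p = cpt (e, r)"
    unfolding cake_eq_image_cpt by auto
  define k where "k = edge_index e"
  have k: "k < L" "edge_at k = e" using edge_index[OF er(1)] unfolding k_def by auto
  have "p = point_at k (real k + orient k r)" unfolding point_at_def using k er by simp
  moreover have "real k \<le> real k + orient k r" "real k + orient k r \<le> real k + 1"
    using er unfolding orient_def by auto
  ultimately show ?thesis using k by blast
qed

lemma coord_point_at: "k < L \<Longrightarrow> real k < s \<Longrightarrow> s < real k + 1 \<Longrightarrow> coord (point_at k s) = s"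
  using point_at_interior[of k s] edge_index_edge_at[of k] unfolding coord_def by simp

lemma point_at_ends:
  "k < L \<Longrightarrow> point_at k (real k) \<in> vertex_points" "k < L \<Longrightarrow> point_at k (real k + 1) \<in> vertex_points"
  using point_at_left point_at_right parent dfs_order_in_V dfs_order_neq_root
    unfolding vertex_points_def by auto

lemma cake_interior_point_at:
  "p \<in> cake E \<Longrightarrow> p \<notin> vertex_points \<Longrightarrow> \<exists>k<L. \<exists>s. real k < s \<and> s < real k + 1 \<and> p = point_at k s"
proof -
  assume p: "p \<in> cake E" "p \<notin> vertex_points"
  then obtain k s where k: "k < L" "real k \<le> s" "s \<le> real k + 1" "p = point_at k s"
    using cake_point_at by blast
  have "s \<noteq> real k" "s \<noteq> real k + 1" using point_at_ends[OF k(1)] k(4) p(2) by auto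
  then have "real k < s" "s < real k + 1" using k by auto
  then show ?thesis using k by blast
qed

lemma edge_end_le_L: "k < L \<Longrightarrow> real k + 1 \<le> real L" using nat_less_real_le by blast

lemma coord_interior_bounds: "p \<in> cake E \<Longrightarrow> p \<notin> vertex_points \<Longrightarrow> 0 < coord p \<and> coord p < real L"
proof -
  assume "p \<in> cake E" "p \<notin> vertex_points"
  then obtain k s where k: "k < L" "real k < s" "s < real k + 1" "p = point_at k s"
    using cake_interior_point_at by blast
  then have "coord p = s" using coord_point_at by simp
  then show ?thesis using k edge_end_le_L[OF k(1)] by simp
qed

lemma coord_vertex:
  "p \<in> cake E \<Longrightarrow> p \<in> vertex_points \<Longrightarrow> \<exists>w\<in>V. p = Vtx w \<and> coord p = -1 - real (vertex_code w)"
  unfolding vertex_points_def coord_def by auto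

lemma inj_on_coord: "inj_on coord (cake E)"
proof (rule inj_onI)
  fix p q assume p: "p \<in> cake E" and q: "q \<in> cake E" and eq: "coord p = coord q"
  show "p = q"
  proof (cases "p \<in> vertex_points"; cases "q \<in> vertex_points")
    assume "p \<in> vertex_points" "q \<in> vertex_points"
    then obtain u w where uw: "u \<in> V" "w \<in> V" "p = Vtx u" "q = Vtx w"
        "coord p = -1 - real (vertex_code u)" "coord q = -1 - real (vertex_code w)"
      using coord_vertex p q by metis
    then have "vertex_code u = vertex_code w" using eq by simp
    then show ?thesis using inj_on_vertex_code uw by (auto dest: inj_onD)
  next
    assume "p \<in> vertex_points" "q \<notin> vertex_points"
    then obtain u where "coord p = -1 - real (vertex_code u)" using coord_vertex[OF p] by metis
    then show ?thesis using coord_interior_bounds[OF q \<open>q \<notin> vertex_points\<close>] eq by simp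
  next
    assume "p \<notin> vertex_points" "q \<in> vertex_points"
    then obtain u where "coord q = -1 - real (vertex_code u)" using coord_vertex[OF q] by metis
    then show ?thesis using coord_interior_bounds[OF p \<open>p \<notin> vertex_points\<close>] eq by simp
  next
    assume "p \<notin> vertex_points" "q \<notin> vertex_points"
    then obtain k s k' s' where a: "k < L" "real k < s" "s < real k + 1" "p = point_at k s"
      and b: "k' < L" "real k' < s'" "s' < real k' + 1" "q = point_at k' s'"
      using cake_interior_point_at p q by metis
    have ss: "s = s'" using coord_point_at a b eq by auto
    have kk: "k = k'"
    proof -
      have "real k < real k' + 1" "real k' < real k + 1" using a b ss by auto
      then show ?thesis by linarith
    qed
    show ?thesis using a(4) b(4) ss kk by simp
  qed
qed

lemma finite_vertex_points: "finite vertex_points"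
  unfolding vertex_points_def using finite_V by auto

lemma stretch_subset_cake: "stretch a b \<subseteq> cake E"
  unfolding stretch_def edge_segment_def using point_at_in_cake by auto

lemma point_at_in_stretch:
  "k < L \<Longrightarrow> real k \<le> s \<Longrightarrow> s \<le> real k + 1 \<Longrightarrow> a \<le> s \<Longrightarrow> s \<le> b \<Longrightarrow> max a (real k) < min b (real k + 1)
   \<Longrightarrow> point_at k s \<in> stretch a b"
  unfolding stretch_def edge_segment_def by auto

lemma interior_in_stretch_iff: assumes "p \<in> cake E" "p \<notin> vertex_points"
  shows "p \<in> stretch a b \<longleftrightarrow> a \<le> coord p \<and> coord p \<le> b \<and> a < b"
proof
  assume "p \<in> stretch a b"
  then obtain k s where k: "k < L" "max a (real k) < min b (real k + 1)"
      "max a (real k) \<le> s" "s \<le> min b (real k + 1)" "p = point_at k s"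
    unfolding stretch_def edge_segment_def by auto
  have "s \<noteq> real k" "s \<noteq> real k + 1" using point_at_ends[OF k(1)] k(5) assms(2) by auto
  then have "coord p = s" using coord_point_at k by auto
  then show "a \<le> coord p \<and> coord p \<le> b \<and> a < b" using k by auto
next
  assume ab: "a \<le> coord p \<and> coord p \<le> b \<and> a < b"
  obtain k s where k: "k < L" "real k < s" "s < real k + 1" "p = point_at k s"
    using cake_interior_point_at assms by blast
  then have "coord p = s" using coord_point_at by auto
  then show "p \<in> stretch a b" using k ab
    by (intro point_at_in_stretch[of k s a b, simplified k(4)[symmetric]]) auto
qed

lemma stretch_empty: "b \<le> a \<Longrightarrow> stretch a b = {}"
  unfolding stretch_def by auto

section \<open>Connected components of stretches\<close>

lemma topspace_subtopology_cake: "S \<subseteq> cake E \<Longrightarrow> topspace (subtopology (cake_top E) S) = S"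
  unfolding topspace_subtopology cake_def by auto

lemma continuous_map_segment_param:
  assumes k: "k < L" and s: "real k \<le> s1" "s1 \<le> s2" "s2 \<le> real k + 1"
  shows "continuous_map (top_of_set {0..1}) (edges_top E)
           (\<lambda>\<tau>. (edge_at k, orient k (s1 + \<tau> * (s2 - s1) - real k)))"
proof -
  have range: "orient k (s1 + \<tau> * (s2 - s1) - real k) \<in> {0..1}" if "\<tau> \<in> {0..1}" for \<tau>
  proof -
    have "0 \<le> \<tau> * (s2 - s1)" using that s by auto
    moreover have "\<tau> * (s2 - s1) \<le> s2 - s1" using that s by (intro mult_left_le_one_le) auto
    ultimately show ?thesis using s unfolding orient_def by auto
  qed
  have c2: "continuous_on {0..1} (\<lambda>\<tau>. orient k (s1 + \<tau> * (s2 - s1) - real k))"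
    unfolding orient_def by (cases "reversed k") (auto intro!: continuous_intros)
  show ?thesis
    unfolding edges_top_def continuous_map_in_subtopology continuous_map_pairwise
    using c2 range edge_at_in_E[OF k] by (auto simp: o_def)
qed

lemma path_component_edge_segment:
  assumes k: "k < L" and s: "real k \<le> s1" "s1 \<le> s2" "s2 \<le> real k + 1" and S: "edge_segment k s1 s2 \<subseteq> S"
  shows "path_component_of (subtopology (cake_top E) S) (point_at k s1) (point_at k s2)"
proof -
  define g where "g \<tau> = point_at k (s1 + \<tau> * (s2 - s1))" for \<tau>
  have "g = cpt \<circ> (\<lambda>\<tau>. (edge_at k, orient k (s1 + \<tau> * (s2 - s1) - real k)))"
    unfolding g_def point_at_def by (auto simp: o_def)
  then have gc: "continuous_map (top_of_set {0..1}) (cake_top E) g"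
    unfolding cake_top_def
    using continuous_map_compose[OF continuous_map_segment_param[OF k s] continuous_map_quotient_topology]
    by simp
  have gS: "g \<tau> \<in> S" if "\<tau> \<in> {0..1}" for \<tau>
  proof -
    have "0 \<le> \<tau> * (s2 - s1)" using that s by auto
    moreover have "\<tau> * (s2 - s1) \<le> s2 - s1" using that s by (intro mult_left_le_one_le) auto
    ultimately have "s1 + \<tau> * (s2 - s1) \<in> {s1..s2}" by auto
    then show ?thesis using S unfolding g_def edge_segment_def by auto
  qed
  have "pathin (subtopology (cake_top E) S) g"
    unfolding pathin_def continuous_map_in_subtopology using gc gS by auto
  moreover have "g 0 = point_at k s1" "g 1 = point_at k s2" unfolding g_def by auto
  ultimately show ?thesis unfolding path_component_of_def by blast
qed

lemma edge_segment_subset_stretch: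
  "k < L \<Longrightarrow> max a (real k) < min b (real k + 1) \<Longrightarrow>
   edge_segment k (max a (real k)) (min b (real k + 1)) \<subseteq> stretch a b"
  unfolding stretch_def by auto

lemma stretchE:
  assumes "p \<in> stretch a b"
  obtains k s where "k < L" "max a (real k) < min b (real k + 1)"
    "max a (real k) \<le> s" "s \<le> min b (real k + 1)" "p = point_at k s"
  using assms unfolding stretch_def edge_segment_def by auto

lemma edge_segment_mono: "a' \<le> a \<Longrightarrow> b \<le> b' \<Longrightarrow> edge_segment k a b \<subseteq> edge_segment k a' b'"
  unfolding edge_segment_def by auto

lemma path_component_stretch_edge:
  assumes "k < L" "max a (real k) < min b (real k + 1)"
    "max a (real k) \<le> s1" "s1 \<le> s2" "s2 \<le> min b (real k + 1)"
  shows "path_component_of (subtopology (cake_top E) (stretch a b)) (point_at k s1) (point_at k s2)"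
proof (rule path_component_edge_segment)
  show "edge_segment k s1 s2 \<subseteq> stretch a b"
    using edge_segment_subset_stretch[OF assms(1,2)] edge_segment_mono[of "max a (real k)" s1 s2] assms(3-5)
    by blast
qed (use assms in auto)

lemma parent_path_component_root:
  "k < L \<Longrightarrow> real k < x \<Longrightarrow>
   path_component_of (subtopology (cake_top E) (stretch 0 x)) (Vtx (parent (dfs_order ! k))) (Vtx R)"
proof (induction k rule: less_induct)
  case (less k)
  let ?X = "subtopology (cake_top E) (stretch 0 x)"
  show ?case
  proof (cases "parent (dfs_order ! k) = R")
    case True
    have "point_at k (real k) \<in> stretch 0 x" using less.prems by (intro point_at_in_stretch) auto
    then show ?thesis
      using True point_at_left[OF less.prems(1)] topspace_subtopology_cake[OF stretch_subset_cake]
      by (simp add: path_component_of_refl)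
  next
    case False
    then obtain k' where k': "k' < k" "parent (dfs_order ! k) = dfs_order ! k'"
      using parent_precedes[OF less.prems(1)] by auto
    have k'L: "k' < L" and r: "real k' + 1 \<le> real k"
      using k' less.prems nat_less_real_le[THEN iffD1, OF k'(1)] by auto
    have "path_component_of ?X (point_at k' (real k')) (point_at k' (real k' + 1))"
      using k'L r less.prems by (intro path_component_stretch_edge) auto
    then have "path_component_of ?X (Vtx (parent (dfs_order ! k))) (Vtx (parent (dfs_order ! k')))"
      using point_at_left[OF k'L] point_at_right[OF k'L] k'(2) by (simp add: path_component_of_sym)
    then show ?thesis
      using less.IH[OF k'(1) k'L] less.prems r by (auto intro: path_component_of_trans)
  qed
qed

lemma initial_stretch_path_component_root:
  assumes "p \<in> stretch 0 x"
  shows "path_component_of (subtopology (cake_top E) (stretch 0 x)) p (Vtx R)"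
proof -
  obtain k s where k: "k < L" "max 0 (real k) < min x (real k + 1)" "max 0 (real k) \<le> s"
     "s \<le> min x (real k + 1)" "p = point_at k s"
    using assms by (rule stretchE)
  have "path_component_of (subtopology (cake_top E) (stretch 0 x)) (point_at k (real k)) (point_at k s)"
    using k by (intro path_component_stretch_edge) auto
  then have "path_component_of (subtopology (cake_top E) (stretch 0 x)) p (Vtx (parent (dfs_order ! k)))"
    using k(5) point_at_left[OF k(1)] by (simp add: path_component_of_sym)
  moreover have "real k < x" using k by auto
  ultimately show ?thesis using parent_path_component_root[OF k(1)]
    by (blast intro: path_component_of_trans)
qed

definition ancestor_points :: "'v \<Rightarrow> 'v cake_pt set" where
  "ancestor_points w = Vtx ` {u \<in> V. prefix (path_label u) (path_label w)}"

lemma finite_ancestor_points: "finite (ancestor_points w)"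
  unfolding ancestor_points_def using finite_V by auto

lemma root_in_ancestor_points: "Vtx R \<in> ancestor_points w"
  unfolding ancestor_points_def using R path_label_root by auto

lemma card_ancestor_points: "card (ancestor_points w) \<le> Suc (depth w)"
proof -
  let ?U = "{u \<in> V. prefix (path_label u) (path_label w)}"
  have "card (ancestor_points w) \<le> card ?U"
    unfolding ancestor_points_def using finite_V by (intro card_image_le) auto
  also have "card ?U = card (path_label ` ?U)"
    using inj_on_path_label by (intro card_image[symmetric]) (auto intro: inj_on_subset)
  also have "\<dots> \<le> card (set (prefixes (path_label w)))"
    by (intro card_mono) (auto simp: in_set_prefixes)
  also have "\<dots> = Suc (depth w)" by (simp add: card_set_prefixes length_path_label)
  finally show ?thesis .
qed

lemma path_component_stretch_within_edge:
  assumes k: "k < L" "real k \<le> a" "b \<le> real k + 1" and p: "p \<in> stretch a b"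
  shows "path_component_of (subtopology (cake_top E) (stretch a b)) p (point_at k a)"
proof -
  obtain k' s where k': "k' < L" "max a (real k') < min b (real k' + 1)" "max a (real k') \<le> s"
    "s \<le> min b (real k' + 1)" "p = point_at k' s"
    using p by (rule stretchE)
  have "k' = k"
    using k k'(2) nat_less_real_le[of k' k] nat_less_real_le[of k k']
    by (cases k' k rule: linorder_cases) auto
  then have "path_component_of (subtopology (cake_top E) (stretch a b)) (point_at k a) (point_at k s)"
    using k k' by (intro path_component_stretch_edge) auto
  then show ?thesis using k'(5) \<open>k' = k\<close> by (simp add: path_component_of_sym)
qed

text \<open>Climbing from edge \<open>k\<close> towards the root: the parent edge either comes after \<open>k0\<close>,
  hence lies in the stretch, or its upper end is an ancestor of \<open>dfs_order ! k0\<close>, because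
  subtrees are contiguous in the depth-first order.\<close>

lemma parent_path_component_ancestor_points:
  assumes "k0 < k" "k < L" "real k < b" "real k0 \<le> a" "a < real k0 + 1"
  shows "\<exists>q\<in>ancestor_points (dfs_order ! k0).
           path_component_of (subtopology (cake_top E) (stretch a b)) (Vtx (parent (dfs_order ! k))) q"
  using assms
proof (induction k rule: less_induct)
  case (less k)
  let ?X = "subtopology (cake_top E) (stretch a b)"
  have "point_at k (real k) \<in> stretch a b"
    using less.prems nat_less_real_le[THEN iffD1, OF less.prems(1)]
      by (intro point_at_in_stretch) auto
  then have refl: "path_component_of ?X (Vtx (parent (dfs_order ! k))) (Vtx (parent (dfs_order ! k)))"
    using point_at_left[OF less.prems(2)] topspace_subtopology_cake[OF stretch_subset_cake]
    by (simp add: path_component_of_refl)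
  show ?case
  proof (cases "parent (dfs_order ! k) = R")
    case True
    then show ?thesis using refl root_in_ancestor_points by auto
  next
    case False
    then obtain k' where k': "k' < k" "parent (dfs_order ! k) = dfs_order ! k'"
      using parent_precedes[OF less.prems(2)] by auto
    have k'L: "k' < L" using k' less.prems by auto
    show ?thesis
    proof (cases "k' \<le> k0")
      case True
      have "prefix (path_label (dfs_order ! k')) (path_label (dfs_order ! k))"
        using path_label_parent[OF dfs_order_in_V[OF less.prems(2)] dfs_order_neq_root[OF less.prems(2)]] k'(2)
        by auto
      then have "prefix (path_label (dfs_order ! k')) (path_label (dfs_order ! k0))"
        using subtree_contiguous[OF True _ less.prems(2)] less.prems(1) by auto
      then have "Vtx (parent (dfs_order ! k)) \<in> ancestor_points (dfs_order ! k0)"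
        unfolding ancestor_points_def using k'(2) dfs_order_in_V[OF k'L] by auto
      then show ?thesis using refl by auto
    next
      case False
      have r: "real k0 + 1 \<le> real k'" "real k' + 1 \<le> real k"
        using False k'(1) nat_less_real_le[of k0 k'] nat_less_real_le[of k' k] by auto
      obtain q where q: "q \<in> ancestor_points (dfs_order ! k0)"
        "path_component_of ?X (Vtx (parent (dfs_order ! k'))) q"
        using less.IH[OF k'(1)] False k'L r less.prems by auto
      have "path_component_of ?X (point_at k' (real k')) (point_at k' (real k' + 1))"
        using k'L r less.prems by (intro path_component_stretch_edge) auto
      then have "path_component_of ?X (Vtx (parent (dfs_order ! k))) (Vtx (parent (dfs_order ! k')))"
        using point_at_left[OF k'L] point_at_right[OF k'L] k'(2)
          by (simp add: path_component_of_sym)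
      then show ?thesis using q by (blast intro: path_component_of_trans)
    qed
  qed
qed

lemma path_component_stretch_across_edges:
  assumes k0: "k0 < L" "real k0 \<le> a" "a < real k0 + 1" "real k0 + 1 < b" and p: "p \<in> stretch a b"
  shows "\<exists>q\<in>ancestor_points (dfs_order ! k0). path_component_of (subtopology (cake_top E) (stretch a b)) p q"
proof -
  let ?X = "subtopology (cake_top E) (stretch a b)"
  obtain k s where k: "k < L" "max a (real k) < min b (real k + 1)" "max a (real k) \<le> s"
    "s \<le> min b (real k + 1)" "p = point_at k s"
    using p by (rule stretchE)
  have "\<not> k < k0" using k(2) k0 nat_less_real_le[of k k0] by auto
  then consider "k = k0" | "k0 < k" by linarith
  then show ?thesis
  proof cases
    case 1
    have "path_component_of ?X (point_at k s) (point_at k (real k + 1))"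
      using k k0 1 by (intro path_component_stretch_edge) auto
    then have "path_component_of ?X p (point_at k (real k + 1))" using k(5) by simp
    moreover have "point_at k (real k + 1) \<in> ancestor_points (dfs_order ! k0)"
      unfolding ancestor_points_def using point_at_right[OF k(1)] 1 dfs_order_in_V[OF k(1)] by auto
    ultimately show ?thesis by blast
  next
    case 2
    have r: "real k0 + 1 \<le> real k" using nat_less_real_le[THEN iffD1, OF 2] .
    have "path_component_of ?X (point_at k (real k)) (point_at k s)"
      using k k0 r by (intro path_component_stretch_edge) auto
    then have "path_component_of ?X p (Vtx (parent (dfs_order ! k)))"
      using k(5) point_at_left[OF k(1)] by (simp add: path_component_of_sym)
    moreover obtain q where "q \<in> ancestor_points (dfs_order ! k0)"
      "path_component_of ?X (Vtx (parent (dfs_order ! k))) q"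
      using parent_path_component_ancestor_points[OF 2 k(1) _ k0(2,3)] k(2) r by auto
    ultimately show ?thesis by (blast intro: path_component_of_trans)
  qed
qed

lemma stretch_path_component_representatives:
  assumes a0: "0 \<le> a" and ab: "a < b" and bL: "b \<le> real L"
  obtains T where "finite T"
    "\<And>p. p \<in> stretch a b \<Longrightarrow> \<exists>q\<in>T. path_component_of (subtopology (cake_top E) (stretch a b)) p q"
    "card T \<le> 1 \<or> (Vtx R \<in> T \<and> (\<exists>w\<in>V. card T \<le> Suc (depth w)))"
proof -
  define k0 where "k0 = nat \<lfloor>a\<rfloor>"
  have k0a: "real k0 \<le> a" "a < real k0 + 1" unfolding k0_def using a0 by linarith+
  have k0L: "k0 < L" using k0a ab bL by (simp add: of_nat_less_iff[symmetric])
  show thesis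
  proof (cases "b \<le> real k0 + 1")
    case True
    then show thesis
      using that[of "{point_at k0 a}"] path_component_stretch_within_edge[OF k0L k0a(1) True]
        by auto
  next
    case False
    then show thesis
      using that[of "ancestor_points (dfs_order ! k0)"] finite_ancestor_points root_in_ancestor_points
        card_ancestor_points dfs_order_in_V[OF k0L] path_component_stretch_across_edges[OF k0L k0a]
          by auto
  qed
qed

lemma num_components_stretch:
  assumes dh: "\<And>w. w \<in> V \<Longrightarrow> depth w \<le> h" and h1: "1 \<le> h" and xy: "0 \<le> x" "y \<le> real L"
  shows "num_components E (stretch x y) \<le> h + 1"
proof (cases "x < y")
  case True
  obtain T where T: "finite T"
    "\<And>p. p \<in> stretch x y \<Longrightarrow> \<exists>q\<in>T. path_component_of (subtopology (cake_top E) (stretch x y)) p q"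
    "card T \<le> 1 \<or> (Vtx R \<in> T \<and> (\<exists>w\<in>V. card T \<le> Suc (depth w)))"
    using stretch_path_component_representatives[OF xy(1) True xy(2)] by blast
  have "num_components E (stretch x y) \<le> card T"
    unfolding num_components_def using T(1,2) topspace_subtopology_cake[OF stretch_subset_cake]
    by (intro card_path_components_le) auto
  also have "card T \<le> h + 1" using T(3) dh h1 by force
  finally show ?thesis .
qed (simp add: stretch_empty num_components_def)

lemma num_components_outer_stretches:
  assumes dh: "\<And>w. w \<in> V \<Longrightarrow> depth w \<le> h" and h1: "1 \<le> h" and xy: "0 \<le> y"
  shows "num_components E (stretch 0 x \<union> stretch y (real L)) \<le> h + 1"
proof -
  let ?B = "stretch 0 x \<union> stretch y (real L)"
  obtain T where T: "finite T"
    "\<And>p. p \<in> stretch y (real L) \<Longrightarrow>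
       \<exists>q\<in>T. path_component_of (subtopology (cake_top E) (stretch y (real L))) p q"
    "card T \<le> 1 \<or> (Vtx R \<in> T \<and> (\<exists>w\<in>V. card T \<le> Suc (depth w)))"
  proof (cases "y < real L")
    case True
    then show thesis using stretch_path_component_representatives[OF xy True] that by blast
  qed (use that[of "{}"] stretch_empty in auto)
  have "\<exists>q\<in>insert (Vtx R) T. path_component_of (subtopology (cake_top E) ?B) p q" if p: "p \<in> ?B" for p
  proof (cases "p \<in> stretch 0 x")
    case True
    then have "path_component_of (subtopology (cake_top E) ?B) p (Vtx R)"
      by (rule path_component_of_mono[OF initial_stretch_path_component_root]) blast
    then show ?thesis by blast
  next
    case False
    then obtain q where "q \<in> T" "path_component_of (subtopology (cake_top E) (stretch y (real L))) p q"
      using p T(2) by blast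
    then show ?thesis by (blast intro: path_component_of_mono)
  qed
  then have "num_components E ?B \<le> card (insert (Vtx R) T)"
    unfolding num_components_def using T(1) topspace_subtopology_cake[of ?B] stretch_subset_cake
    by (intro card_path_components_le) auto
  also have "card (insert (Vtx R) T) \<le> h + 1"
    using T(1,3) dh h1 by (force simp: card_insert_if)
  finally show ?thesis .
qed

end

lemma piece_desc_union: "piece_desc E P \<Longrightarrow> piece_desc E Q \<Longrightarrow>
   piece_desc E (P \<union> Q) \<and> piece_set (P \<union> Q) = piece_set P \<union> piece_set Q"
  unfolding piece_desc_def piece_set_def by auto

context rooted_tree begin

definition lo :: "nat \<Rightarrow> real \<Rightarrow> real \<Rightarrow> real" where
  "lo k a b = (if reversed k then 1 - (b - real k) else a - real k)"
definition hi :: "nat \<Rightarrow> real \<Rightarrow> real \<Rightarrow> real" where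
  "hi k a b = (if reversed k then 1 - (a - real k) else b - real k)"

lemma edge_segment_eq_cpt_image:
  assumes "real k \<le> a" "a < b" "b \<le> real k + 1"
  shows "edge_segment k a b = cpt ` ({edge_at k} \<times> {lo k a b..hi k a b})"
proof
  show "edge_segment k a b \<subseteq> cpt ` ({edge_at k} \<times> {lo k a b..hi k a b})"
  proof
    fix p assume "p \<in> edge_segment k a b"
    then obtain s where s: "a \<le> s" "s \<le> b" "p = point_at k s" unfolding edge_segment_def by auto
    have "orient k (s - real k) \<in> {lo k a b..hi k a b}"
      using s unfolding lo_def hi_def orient_def by auto
    then show "p \<in> cpt ` ({edge_at k} \<times> {lo k a b..hi k a b})"
      using s(3) unfolding point_at_def by auto
  qed
next
  show "cpt ` ({edge_at k} \<times> {lo k a b..hi k a b}) \<subseteq> edge_segment k a b"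
  proof
    fix p assume "p \<in> cpt ` ({edge_at k} \<times> {lo k a b..hi k a b})"
    then obtain r where r: "lo k a b \<le> r" "r \<le> hi k a b" "p = cpt (edge_at k, r)" by auto
    have "real k + orient k r \<in> {a..b}"
      using r(1,2) unfolding lo_def hi_def orient_def by (auto split: if_splits)
    moreover have "point_at k (real k + orient k r) = p" unfolding point_at_def using r(3) by simp
    ultimately show "p \<in> edge_segment k a b" unfolding edge_segment_def by force
  qed
qed

definition stretch_desc :: "real \<Rightarrow> real \<Rightarrow> (('v \<times> 'v) \<times> real \<times> real) set" where
  "stretch_desc a b = (\<lambda>k. (edge_at k, lo k (max a (real k)) (min b (real k + 1)),
                                  hi k (max a (real k)) (min b (real k + 1))))
      ` {k. k < L \<and> max a (real k) < min b (real k + 1)}"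

lemma stretch_desc_piece:
  "piece_desc E (stretch_desc a b) \<and> piece_set (stretch_desc a b) = stretch a b"
proof
  show "piece_desc E (stretch_desc a b)"
    unfolding piece_desc_def stretch_desc_def using edge_at_in_E by (auto simp: lo_def hi_def)
  have "piece_set (stretch_desc a b) = (\<Union>k\<in>{k. k < L \<and> max a (real k) < min b (real k + 1)}.
      cpt ` ({edge_at k} \<times>
        {lo k (max a (real k)) (min b (real k + 1))..hi k (max a (real k)) (min b (real k + 1))}))"
    unfolding piece_set_def stretch_desc_def by auto
  also have "\<dots> = stretch a b" unfolding stretch_def
    by (intro SUP_cong refl edge_segment_eq_cpt_image[symmetric]) auto
  finally show "piece_set (stretch_desc a b) = stretch a b" .
qed

lemma is_piece_stretch: "is_piece E (stretch a b)"
  unfolding is_piece_def using stretch_desc_piece by metis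

lemma is_piece_stretch_union: "is_piece E (stretch a b \<union> stretch c d)"
  unfolding is_piece_def using stretch_desc_piece[of a b] stretch_desc_piece[of c d] piece_desc_union by metis

lemma stretch_mono: "a \<le> a' \<Longrightarrow> b' \<le> b \<Longrightarrow> stretch a' b' \<subseteq> stretch a b"
  unfolding stretch_def edge_segment_def by fastforce

lemma stretch_split:
  assumes "a \<le> b" "b \<le> c"
  shows "stretch a c = stretch a b \<union> stretch b c"
proof
  show "stretch a c \<subseteq> stretch a b \<union> stretch b c"
  proof
    fix p assume "p \<in> stretch a c"
    then obtain k s where k: "k < L" "max a (real k) < min c (real k + 1)" "max a (real k) \<le> s"
      "s \<le> min c (real k + 1)" "p = point_at k s"
      by (rule stretchE)
    have lin: "a \<le> s" "real k \<le> s" "s \<le> c" "s \<le> real k + 1" "a < real k + 1" "a < c" "real k < c"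
      using k(2-4) by auto
    then consider "s \<le> b" "a < b" "real k < b" | "b \<le> s" "b < c" "b < real k + 1"
      using assms by (cases "s \<le> b"; cases "a < b"; cases "real k < b") auto
    then show "p \<in> stretch a b \<union> stretch b c"
      by cases (use k lin in \<open>auto intro!: point_at_in_stretch\<close>)
  qed
qed (use assms stretch_mono in auto)

lemma stretch_whole: "stretch 0 (real L) = cake E"
proof
  show "cake E \<subseteq> stretch 0 (real L)"
    using cake_point_at edge_end_le_L by (force intro: point_at_in_stretch)
qed (rule stretch_subset_cake)

lemma stretches_cover:
  assumes "0 \<le> x" "x \<le> y" "y \<le> real L"
  shows "cake E = stretch 0 x \<union> stretch x y \<union> stretch y (real L)"
  using stretch_split[of 0 x "real L"] stretch_split[of x y "real L"] stretch_whole assms by auto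

lemma finite_stretch_inter:
  assumes "0 \<le> x" "x \<le> y" "y \<le> real L"
  shows "finite (stretch x y \<inter> (stretch 0 x \<union> stretch y (real L)))"
proof -
  have "stretch x y \<inter> (stretch 0 x \<union> stretch y (real L)) \<subseteq> vertex_points \<union> (coord -` {x, y} \<inter> cake E)"
  proof
    fix p assume p: "p \<in> stretch x y \<inter> (stretch 0 x \<union> stretch y (real L))"
    then have pc: "p \<in> cake E" using stretch_subset_cake by auto
    show "p \<in> vertex_points \<union> (coord -` {x, y} \<inter> cake E)"
    proof (cases "p \<in> vertex_points")
      case False
      then have "coord p = x \<or> coord p = y" using p interior_in_stretch_iff[OF pc False] by auto
      then show ?thesis using pc by auto
    qed simp
  qed
  moreover have "finite (vertex_points \<union> (coord -` {x, y} \<inter> cake E))"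
    using finite_vertex_points finite_vimage_IntI[OF _ inj_on_coord, of "{x,y}"] by auto
  ultimately show ?thesis by (rule finite_subset)
qed

end

section \<open>Valuations along the layout\<close>

locale rooted_tree_valuation = rooted_tree V E R for V :: "'v set" and E R +
  fixes v :: "'v cake_pt measure"
  assumes val: "valuation E v"
begin

lemma space_v:
  "space v = cake E" and sets_v: "sets v = sets (cake_borel E)" and prob_space_v: "prob_space v"
  and singleton_null: "\<And>x. x \<in> cake E \<Longrightarrow> emeasure v {x} = 0"
  using val unfolding valuation_def by auto

interpretation P: prob_space v by (rule prob_space_v)

lemma closedin_coord_le: "closedin (cake_top E) {w \<in> cake E. coord w \<le> z}"
proof (rule closedin_cake_top_edgewise[OF finite_E])
  show "{w \<in> cake E. coord w \<le> z} \<subseteq> cake E" by auto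
  fix e assume e: "e \<in> E"
  define k where "k = edge_index e"
  have k: "k < L" "edge_at k = e" using edge_index[OF e] unfolding k_def by auto
  have coord_cpt: "coord (cpt (e, r)) = (if r = 0 then -1 - real (vertex_code (fst e))
      else if r = 1 then -1 - real (vertex_code (snd e))
      else real k + orient k r)" for r
    unfolding cpt_def coord_def k_def by auto
  have incake: "cpt (e, r) \<in> cake E" if "r \<in> {0..1}" for r
    unfolding cake_eq_image_cpt using e that by auto
  show "closed {r \<in> {0..1}. cpt (e, r) \<in> {w \<in> cake E. coord w \<le> z}}"
  proof (cases "0 \<le> z")
    case True
    have "{r \<in> {0..1}. cpt (e, r) \<in> {w \<in> cake E. coord w \<le> z}} =
        {0..1} \<inter> ({0, 1} \<union> {r. real k + orient k r \<le> z})"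
      using incake True by (auto simp: coord_cpt)
    moreover have "closed {r. real k + orient k r \<le> z}"
    proof (cases "reversed k")
      case True
      then have "{r. real k + orient k r \<le> z} = {real k + 1 - z..}" unfolding orient_def by auto
      then show ?thesis by simp
    next
      case False
      then have "{r. real k + orient k r \<le> z} = {..z - real k}" unfolding orient_def by auto
      then show ?thesis by simp
    qed
    ultimately show ?thesis
      by (metis closed_Int closed_Un closed_atLeastAtMost finite.emptyI finite.insertI finite_imp_closed)
  next
    case False
    have "{r \<in> {0..1}. cpt (e, r) \<in> {w \<in> cake E. coord w \<le> z}} \<subseteq> {0, 1}"
    proof
      fix r assume r: "r \<in> {r \<in> {0..1}. cpt (e, r) \<in> {w \<in> cake E. coord w \<le> z}}"
      show "r \<in> {0, 1}"
      proof (rule ccontr)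
        assume "r \<notin> {0, 1}"
        then have "coord (cpt (e, r)) = real k + orient k r" "0 < orient k r"
          using r by (auto simp: coord_cpt orient_def)
        then show False using r False by auto
      qed
    qed
    then show ?thesis by (meson finite.emptyI finite.insertI finite_imp_closed finite_subset)
  qed
qed

lemma coord_measurable: "coord \<in> borel_measurable v"
  unfolding borel_measurable_iff_le space_v sets_v
    using closedin_coord_le closedin_in_cake_borel by blast

lemma finite_null: assumes "F \<subseteq> cake E" "finite F"
  shows "F \<in> sets v" "F \<in> null_sets v" "measure v F = 0"
proof -
  have eq: "F = coord -` (coord ` F) \<inter> space v"
    using assms(1) inj_on_coord unfolding space_v by (auto dest: inj_onD)
  have "coord ` F \<in> sets borel" using assms(2) by (intro borel_closed finite_imp_closed) auto
  then show Fs: "F \<in> sets v" by (subst eq) (rule measurable_sets[OF coord_measurable])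
  have single: "{x} \<in> sets v" if "x \<in> F" for x
  proof -
    have "{x} = coord -` {coord x} \<inter> space v"
      using that assms(1) inj_on_coord unfolding space_v by (auto dest: inj_onD)
    then show ?thesis by (metis borel_singleton measurable_sets[OF coord_measurable] sets.empty_sets)
  qed
  have "emeasure v F = (\<Sum>x\<in>F. emeasure v {x})" using emeasure_eq_sum_singleton[OF assms(2) single] .
  also have "\<dots> = 0" by (intro sum.neutral ballI singleton_null) (use assms(1) in blast)
  finally have em: "emeasure v F = 0" .
  then show "F \<in> null_sets v" using Fs by auto
  show "measure v F = 0" using em by (simp add: measure_def)
qed

definition coord_distr where "coord_distr = distr v borel coord"

lemma real_distribution_coord_distr: "real_distribution coord_distr"
  unfolding real_distribution_def real_distribution_axioms_def coord_distr_def
  using P.prob_space_distr[OF coord_measurable] by simp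

interpretation M: real_distribution coord_distr by (rule real_distribution_coord_distr)

lemma measure_coord_distr:
  "A \<in> sets borel \<Longrightarrow> measure coord_distr A = measure v (coord -` A \<inter> cake E)"
  unfolding coord_distr_def using measure_distr[OF coord_measurable] space_v by simp

lemma coord_distr_singleton: "measure coord_distr {z} = 0"
proof -
  have "finite (coord -` {z} \<inter> cake E)" using finite_vimage_IntI[OF _ inj_on_coord] by auto
  then show ?thesis using measure_coord_distr[of "{z}"] finite_null(3)[of "coord -` {z} \<inter> cake E"]
    by auto
qed

definition coord_cdf where "coord_cdf = cdf coord_distr"

lemma continuous_coord_cdf: "continuous_on S coord_cdf"
  unfolding coord_cdf_def using M.isCont_cdf coord_distr_singleton
    by (intro continuous_at_imp_continuous_on) auto

lemma mono_coord_cdf: "mono_on S coord_cdf"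
  unfolding coord_cdf_def by (intro mono_onI M.cdf_nondecreasing)

lemma coord_cdf_0: "coord_cdf 0 = 0"
proof -
  have sub: "coord -` {..0} \<inter> cake E \<subseteq> vertex_points \<inter> cake E"
    using coord_interior_bounds by fastforce
  then have "finite (coord -` {..0} \<inter> cake E)" using finite_vertex_points finite_subset by blast
  then show ?thesis unfolding coord_cdf_def cdf_def
    using measure_coord_distr[of "{..0}"] finite_null(3) by auto
qed

lemma coord_cdf_L: "coord_cdf (real L) = 1"
proof -
  have "coord -` {..real L} \<inter> cake E = cake E"
  proof (intro equalityI subsetI)
    fix p assume p: "p \<in> cake E"
    show "p \<in> coord -` {..real L} \<inter> cake E"
    proof (cases "p \<in> vertex_points")
      case True
      then obtain w where "coord p = -1 - real (vertex_code w)" using coord_vertex[OF p] by metis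
      then show ?thesis using p by auto
    next
      case False
      then show ?thesis using coord_interior_bounds[OF p] p by auto
    qed
  qed auto
  then show ?thesis unfolding coord_cdf_def cdf_def
    using measure_coord_distr[of "{..real L}"] P.prob_space space_v by simp
qed

lemma coord_distr_Icc: assumes "a \<le> b"
  shows "measure coord_distr {a..b} = coord_cdf b - coord_cdf a"
proof -
  have s1: "{..b} \<in> sets coord_distr" "{..<a} \<in> sets coord_distr"
    "{..a} \<in> sets coord_distr" "{a} \<in> sets coord_distr" by auto
  have sub1: "{..<a} \<subseteq> {..b}" using assms by auto
  have "{a..b} = {..b} - {..<a}" using assms by auto
  then have "measure coord_distr {a..b} = measure coord_distr {..b} - measure coord_distr {..<a}"
    using M.finite_measure_Diff[OF s1(1,2) sub1] by simp
  moreover have "measure coord_distr {..<a} = measure coord_distr {..a} - measure coord_distr {a}"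
  proof -
    have "{..<a} = {..a} - {a}" by auto
    moreover have "{a} \<subseteq> {..a}" by auto
    ultimately show ?thesis using M.finite_measure_Diff[OF s1(3,4)] by simp
  qed
  ultimately show ?thesis unfolding coord_cdf_def cdf_def using coord_distr_singleton by simp
qed

lemma stretch_measure:
  "stretch a b \<in> sets v \<and> measure v (stretch a b) = (if a < b then coord_cdf b - coord_cdf a else 0)"
proof (cases "a < b")
  case False
  then show ?thesis using stretch_empty[of b a] by simp
next
  case True
  define N where "N = vertex_points \<inter> cake E"
  have N: "N \<subseteq> cake E" "finite N" unfolding N_def using finite_vertex_points by auto
  define P where "P = coord -` {a..b} \<inter> cake E"
  have Ps: "P \<in> sets v" unfolding P_def
    using measurable_sets[OF coord_measurable, of "{a..b}"] space_v by simp
  have eq: "stretch a b - N = P - N"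
  proof (intro equalityI subsetI)
    fix p assume p: "p \<in> stretch a b - N"
    then have pc: "p \<in> cake E" using stretch_subset_cake by blast
    then have "p \<notin> vertex_points" using p unfolding N_def by blast
    then have "a \<le> coord p \<and> coord p \<le> b" using interior_in_stretch_iff[OF pc] p by blast
    then show "p \<in> P - N" using p pc unfolding P_def by auto
  next
    fix p assume p: "p \<in> P - N"
    then have pc: "p \<in> cake E" unfolding P_def by blast
    then have "p \<notin> vertex_points" using p unfolding N_def by blast
    moreover have "a \<le> coord p \<and> coord p \<le> b" using p unfolding P_def by auto
    ultimately have "p \<in> stretch a b" using interior_in_stretch_iff[OF pc] True by blast
    then show "p \<in> stretch a b - N" using p by blast
  qed
  have AN: "stretch a b \<inter> N \<in> sets v" using finite_null(1)[of "stretch a b \<inter> N"] N by auto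
  have "stretch a b = (P - N) \<union> (stretch a b \<inter> N)" using eq by auto
  then have As: "stretch a b \<in> sets v" using Ps finite_null(1)[OF N] AN by (metis sets.Diff sets.Un)
  have "measure v (stretch a b) = measure v (stretch a b - N)"
    using measure_Diff_null_set[OF As finite_null(2)[OF N]] by simp
  also have "\<dots> = measure v P" unfolding eq
    using measure_Diff_null_set[OF Ps finite_null(2)[OF N]] by simp
  also have "\<dots> = measure coord_distr {a..b}" unfolding P_def using measure_coord_distr by simp
  also have "\<dots> = coord_cdf b - coord_cdf a" using coord_distr_Icc True by simp
  finally show ?thesis using As True by simp
qed

lemma measure_complement_finite_overlap:
  assumes "A \<in> sets v" "B \<in> sets v" "A \<union> B = cake E" "finite (A \<inter> B)"
  shows "measure v B = 1 - measure v A"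
proof -
  have AB: "A \<inter> B \<subseteq> cake E" using assms(3) by auto
  have BA: "B - A \<in> sets v" using assms(1,2) by (intro sets.Diff)
  have "measure v (A \<union> (B - A)) = measure v A + measure v (B - A)"
    using P.finite_measure_Union[OF assms(1) BA] by blast
  moreover have "A \<union> (B - A) = space v" using assms(3) space_v by blast
  moreover have "B - A = B - (A \<inter> B)" by blast
  moreover have "measure v (B - (A \<inter> B)) = measure v B"
    using measure_Diff_null_set[OF assms(2) finite_null(2)[OF AB assms(4)]] .
  ultimately have "1 = measure v A + measure v B" using P.prob_space by metis
  then show ?thesis by linarith
qed

lemma measure_stretch: "x \<le> y \<Longrightarrow> measure v (stretch x y) = coord_cdf y - coord_cdf x"
  using stretch_measure[of x y] by (cases "x < y") auto

lemma measure_outer_stretches: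
  assumes "0 \<le> x" "x \<le> y" "y \<le> real L"
  shows "measure v (stretch 0 x \<union> stretch y (real L)) = 1 - measure v (stretch x y)"
  using stretch_measure stretches_cover[OF assms] finite_stretch_inter[OF assms]
  by (intro measure_complement_finite_overlap) auto

end

lemma is_division_swap: "is_division E \<alpha> \<beta> \<Longrightarrow> is_division E \<beta> \<alpha>"
  unfolding is_division_def by (auto simp: Int_commute Un_commute)

lemma weighted_consensus_swap:
  "weighted_consensus vA vB (1 - t) \<alpha> \<beta> \<Longrightarrow> weighted_consensus vA vB t \<beta> \<alpha>"
  unfolding weighted_consensus_def by auto

context rooted_tree begin

lemma stretch_division:
  assumes "0 \<le> x" "x \<le> y" "y \<le> real L"
  shows "is_division E (stretch x y) (stretch 0 x \<union> stretch y (real L))"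
  unfolding is_division_def
  using is_piece_stretch is_piece_stretch_union stretches_cover[OF assms] finite_stretch_inter[OF assms]
  by blast

lemma consensus_stretch_division:
  assumes vA: "valuation E vA" and vB: "valuation E vB" and t: "0 \<le> t" "t \<le> 1" and L: "0 < L"
  obtains x y \<alpha> \<beta> where "0 \<le> x" "x \<le> y" "y \<le> real L"
    "{\<alpha>, \<beta>} = {stretch x y, stretch 0 x \<union> stretch y (real L)}"
    "is_division E \<alpha> \<beta>" "weighted_consensus vA vB t \<alpha> \<beta>"
proof -
  interpret A: rooted_tree_valuation V E R vA
    by (intro rooted_tree_valuation.intro rooted_tree_axioms rooted_tree_valuation_axioms.intro vA)
  interpret B: rooted_tree_valuation V E R vB
    by (intro rooted_tree_valuation.intro rooted_tree_axioms rooted_tree_valuation_axioms.intro vB)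
  obtain x y where xy: "0 \<le> x" "x \<le> y" "y \<le> real L"
    and eq: "A.coord_cdf y - A.coord_cdf x = B.coord_cdf y - B.coord_cdf x"
    and c: "A.coord_cdf y - A.coord_cdf x = t \<or> A.coord_cdf y - A.coord_cdf x = 1 - t"
    using mono_common_increment[OF _ A.continuous_coord_cdf B.continuous_coord_cdf A.mono_coord_cdf
        B.mono_coord_cdf A.coord_cdf_0 A.coord_cdf_L B.coord_cdf_0 B.coord_cdf_L t] L
    by auto
  let ?\<alpha> = "stretch x y" and ?\<beta> = "stretch 0 x \<union> stretch y (real L)"
  have consensus: "weighted_consensus vA vB (A.coord_cdf y - A.coord_cdf x) ?\<alpha> ?\<beta>"
    unfolding weighted_consensus_def
    using A.measure_stretch B.measure_stretch A.measure_outer_stretches[OF xy] B.measure_outer_stretches[OF xy]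
      xy eq by simp
  from c show thesis
  proof
    assume "A.coord_cdf y - A.coord_cdf x = t"
    then show thesis using that[OF xy _ stretch_division[OF xy]] consensus by auto
  next
    assume "A.coord_cdf y - A.coord_cdf x = 1 - t"
    then show thesis
      using that[OF xy _ is_division_swap[OF stretch_division[OF xy]] weighted_consensus_swap] consensus
      by auto
  qed
qed

end

theorem mainTheorem4:
  fixes V :: "'v set" and E :: "('v \<times> 'v) set"
    and vA vB :: "'v cake_pt measure" and t :: real and h :: nat
  assumes "is_tree V E"
    and "h = min_height V E" and "h \<ge> 1"
    and "valuation E vA" and "valuation E vB"
    and "0 \<le> t" and "t \<le> 1"
  shows "\<exists>\<alpha> \<beta>. is_division E \<alpha> \<beta> \<and> weighted_consensus vA vB t \<alpha> \<beta>
           \<and> num_components E \<alpha> \<le> h + 1 \<and> num_components E \<beta> \<le> h + 1"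
proof -
  obtain R where center: "R \<in> V" "height_at V E R = h"
    using min_height_attained[OF assms(1)] assms(2) by metis
  interpret rooted_tree V E R using assms(1) center(1) by unfold_locales
  have depth: "\<And>w. w \<in> V \<Longrightarrow> depth w \<le> h" using depth_le_height_at center(2) by blast
  have "0 < L" using L_pos center(2) assms(3) by simp
  then obtain x y \<alpha> \<beta> where xy: "0 \<le> x" "x \<le> y" "y \<le> real L"
    and pieces: "{\<alpha>, \<beta>} = {stretch x y, stretch 0 x \<union> stretch y (real L)}"
    and "is_division E \<alpha> \<beta>" "weighted_consensus vA vB t \<alpha> \<beta>"
    using consensus_stretch_division[OF assms(4-7)] by blast
  moreover have "num_components E \<gamma> \<le> h + 1" if "\<gamma> \<in> {\<alpha>, \<beta>}" for \<gamma>
    using that pieces xy num_components_stretch[OF depth assms(3)]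
      num_components_outer_stretches[OF depth assms(3)] by auto
  ultimately show ?thesis by blast
qed

end
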